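(* Let $A+f(A)$ be the free pseudosolution of $(B\le A,f)$, where $B\le A$ (i.e. $B$ is strong in $A$). Then $A+f(B)\le A+f(A)$. If moreover $A$ is a minimal strong extension of $B$, then $A+f(A)$ is a minimal strong extension of $A+f(B)$.
   Context: All vector spaces are over a finite field $\mathbb{F}_q$; $\bigwedge^2X$ is the exterior square. A $2$-nilpotent graded Lie algebra is presented as $V\oplus\bigwedge^2V/N(V)$ with $N(V)\subseteq\bigwedge^2V$. For a linear map $g\colon X\to Y$ between subspaces of a common space, $\tilde g\colon\bigwedge^2X\to\bigwedge^2(X+Y)$ is the linear map with $\tilde g(x\wedge y)=g(x)\wedge y+x\wedge g(y)$. A partially defined graded derivation is a linear map $f\colon B\to V$, $B\subseteq V$ finite-dimensional, with $\tilde f(N(B))\subseteq N(V)$, where $N(X):=N(V)\cap\bigwedge^2X$. Free pseudosolution of $(B\le A,f)$ (finite-dimensional $B\subseteq A\subseteq V$): take an abstract space $U\supseteq A+f(B)$ with $\dim(U/(A+f(B)))=\dim(A/B)$, extend $f$ to linear $f\colon A\to U$ mapping a basis of $A$ over $B$ onto a basis of $U$ over $A+f(B)$ (so $U=A+f(A)$), and set $N(A+f(A)):=N(A+f(B))+\tilde f(N(A))$. For subspaces $X\subseteq A+f(A)$, $N(X):=N(A+f(A))\cap\bigwedge^2X$. Predimension: $\delta(X/Y):=\dim(X/Y)-\dim(N(X)/N(Y))$ for $Y\subseteq X$ with $X$ finite-dimensional over $Y$. Strongness: $Y\le X$ means $\delta(Z/Y)\ge0$ for every subspace $Y\subseteq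 Z\subseteq X$ finite-dimensional over $Y$. $X$ is a minimal strong extension of $Y$ if $Y\le X$, $Y\ne X$, and there is no subspace $Z$ with $Y\subsetneq Z\subsetneq X$ and $Z\le X$. *)

theory Defs
  imports Complex_Main "HOL-Library.Function_Algebras"
begin

text \<open>Exterior square: the library has none, so we use the standard faithful model
of the exterior square as alternating forms on pairs of linear functionals:
x wedge y is the map (phi,psi) |-> phi x * psi y - phi y * psi x (phi, psi linear).
The map from the abstract exterior square of the ambient space to this
function space is injective, so the span of the wedges x wedge y with x, y in X
is a faithful copy of the exterior square of X, compatibly for all subspaces X.\<close>

type_synonym ('a, 'v) ext2 = "('v \<Rightarrow> 'a) \<times> ('v \<Rightarrow> 'a) \<Rightarrow> 'a"

definition esc :: "'a::field \<Rightarrow> ('a, 'v) ext2 \<Rightarrow> ('a, 'v) ext2" where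
  "esc c F = (\<lambda>p. c * F p)"

definition wedge :: "('a::field \<Rightarrow> 'v::ab_group_add \<Rightarrow> 'v) \<Rightarrow> 'v \<Rightarrow> 'v \<Rightarrow> ('a, 'v) ext2" where
  "wedge sc x y = (\<lambda>(\<phi>, \<psi>).
     if Vector_Spaces.linear sc (*) \<phi> \<and> Vector_Spaces.linear sc (*) \<psi>
     then \<phi> x * \<psi> y - \<phi> y * \<psi> x else 0)"

definition Lam2 :: "('a::field \<Rightarrow> 'v::ab_group_add \<Rightarrow> 'v) \<Rightarrow> 'v set \<Rightarrow> ('a, 'v) ext2 set" where
  "Lam2 sc X = module.span esc {wedge sc x y | x y. x \<in> X \<and> y \<in> X}"

definition ssum :: "'b::ab_group_add set \<Rightarrow> 'b set \<Rightarrow> 'b set" where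
  "ssum X Y = {x + y | x y. x \<in> X \<and> y \<in> Y}"

definition linear_on :: "('a::field \<Rightarrow> 'v::ab_group_add \<Rightarrow> 'v) \<Rightarrow> 'v set \<Rightarrow> ('v \<Rightarrow> 'v) \<Rightarrow> bool" where
  "linear_on sc X g \<longleftrightarrow> (\<forall>x\<in>X. \<forall>y\<in>X. g (x + y) = g x + g y) \<and> (\<forall>c. \<forall>x\<in>X. g (sc c x) = sc c (g x))"

definition tilde :: "('a::field \<Rightarrow> 'v::ab_group_add \<Rightarrow> 'v) \<Rightarrow> ('v \<Rightarrow> 'v) \<Rightarrow> 'v set
    \<Rightarrow> ('a, 'v) ext2 \<Rightarrow> ('a, 'v) ext2" where
  "tilde sc g X = (SOME L. Vector_Spaces.linear esc esc L \<and>
      (\<forall>x\<in>X. \<forall>y\<in>X. L (wedge sc x y) = wedge sc (g x) y + wedge sc x (g y)))"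

definition Nof :: "('a::field \<Rightarrow> 'v::ab_group_add \<Rightarrow> 'v) \<Rightarrow> ('a, 'v) ext2 set \<Rightarrow> 'v set \<Rightarrow> ('a, 'v) ext2 set" where
  "Nof sc NW X = NW \<inter> Lam2 sc X"

text \<open>Predimension delta(X/Y) for Y \<subseteq> X with X finite-dimensional
(the only case needed here: then dim(X/Y) = dim X - dim Y etc.).\<close>
definition delta :: "('a::field \<Rightarrow> 'v::ab_group_add \<Rightarrow> 'v) \<Rightarrow> ('a, 'v) ext2 set \<Rightarrow> 'v set \<Rightarrow> 'v set \<Rightarrow> int" where
  "delta sc NW X Y = (int (vector_space.dim sc X) - int (vector_space.dim sc Y))
      - (int (vector_space.dim esc (Nof sc NW X)) - int (vector_space.dim esc (Nof sc NW Y)))"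

definition strong :: "('a::field \<Rightarrow> 'v::ab_group_add \<Rightarrow> 'v) \<Rightarrow> ('a, 'v) ext2 set \<Rightarrow> 'v set \<Rightarrow> 'v set \<Rightarrow> bool" where
  "strong sc NW Y X \<longleftrightarrow> Y \<subseteq> X \<and>
     (\<forall>Z. module.subspace sc Z \<and> Y \<subseteq> Z \<and> Z \<subseteq> X \<longrightarrow> delta sc NW Z Y \<ge> 0)"

definition minimal_strong :: "('a::field \<Rightarrow> 'v::ab_group_add \<Rightarrow> 'v) \<Rightarrow> ('a, 'v) ext2 set \<Rightarrow> 'v set \<Rightarrow> 'v set \<Rightarrow> bool" where
  "minimal_strong sc NW Y X \<longleftrightarrow> strong sc NW Y X \<and> Y \<noteq> X \<and>
     \<not> (\<exists>Z. module.subspace sc Z \<and> Y \<subset> Z \<and> Z \<subset> X \<and> strong sc NW Z X)"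

definition fin_dim :: "('a::field \<Rightarrow> 'v::ab_group_add \<Rightarrow> 'v) \<Rightarrow> 'v set \<Rightarrow> bool" where
  "fin_dim sc X \<longleftrightarrow> (\<exists>S. finite S \<and> X = module.span sc S)"

end

theory Submission
  imports Defs
begin

text \<open>
  Extend \<open>f\<close> to a linear map \<open>g\<close> and fix a complement \<open>C\<close> of \<open>B\<close> in \<open>A\<close>. Freeness says exactly that
  \<open>g\<close> maps \<open>C\<close> isomorphically onto a complement of \<open>W = A + f(B)\<close> in \<open>U = A + f(A)\<close>. Hence the
  subspaces \<open>W \<subseteq> Z \<subseteq> U\<close> are precisely the spaces \<open>W + g(D)\<close> with \<open>D \<subseteq> C\<close>, and they correspond,
  preserving inclusions, to the subspaces \<open>B + D\<close> between \<open>B\<close> and \<open>A\<close>. Both predimension terms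
  match under this correspondence: \<open>dim (W + g D) / W = dim D = dim (B + D) / B\<close>, and a 2-vector
  \<open>n \<in> \<Lambda>\<^sup>2 A\<close> satisfies \<open>g\<^sup>~ n \<in> \<Lambda>\<^sup>2 (W + g D)\<close> iff \<open>n \<in> \<Lambda>\<^sup>2 (B + D)\<close>, so modulo \<open>\<Lambda>\<^sup>2 W\<close> the relations of
  \<open>W + g D\<close> are the image of \<open>N(B + D)\<close> under \<open>g\<^sup>~\<close>, with kernel \<open>N(B)\<close>. Thus
  \<open>\<delta>((W + g D) / W) = \<delta>((B + D) / B)\<close>, and strongness and minimality transfer from \<open>B \<le> A\<close> to
  \<open>W \<le> U\<close>.
\<close>

section \<open>Sums of subspaces and dimensions\<close>

lemma ssumI: "x \<in> X \<Longrightarrow> y \<in> Y \<Longrightarrow> x + y \<in> ssum X Y"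
  by (auto simp: ssum_def)

lemma ssumE: "z \<in> ssum X Y \<Longrightarrow> (\<And>x y. x \<in> X \<Longrightarrow> y \<in> Y \<Longrightarrow> z = x + y \<Longrightarrow> P) \<Longrightarrow> P"
  by (auto simp: ssum_def)

lemma subset_ssum_left: "0 \<in> Y \<Longrightarrow> X \<subseteq> ssum X Y"
  by (metis add.right_neutral ssumI subsetI)

lemma subset_ssum_right: "0 \<in> X \<Longrightarrow> Y \<subseteq> ssum X Y"
  by (metis add.left_neutral ssumI subsetI)

lemma ssum_zero_right: "ssum X {0} = X"
  by (auto simp: ssum_def)

lemma delta_diff: "delta sc N X Z = delta sc N X Y - delta sc N Z Y"
  by (simp add: delta_def)

context vector_space begin

lemma span_Un_eq_ssum: "span (S \<union> T) = ssum (span S) (span T)"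
  by (simp add: span_Un ssum_def)

lemma subspace_ssum: "subspace X \<Longrightarrow> subspace Y \<Longrightarrow> subspace (ssum X Y)"
  using subspace_sums by (simp add: ssum_def)

lemma ssum_inter_eq:
  assumes "subspace Y" "X \<subseteq> Y" "Y \<subseteq> ssum X C"
  shows "Y = ssum X (C \<inter> Y)"
proof
  show "ssum X (C \<inter> Y) \<subseteq> Y"
    using assms(1,2) subspace_add by (fastforce elim: ssumE)
  show "Y \<subseteq> ssum X (C \<inter> Y)"
  proof
    fix y assume y: "y \<in> Y"
    then have "y \<in> ssum X C" using assms(3) by blast
    then obtain x c where xc: "x \<in> X" "c \<in> C" "y = x + c" by (rule ssumE)
    then have "c \<in> Y" using subspace_diff[OF assms(1) y, of x] assms(2) by auto
    then show "y \<in> ssum X (C \<inter> Y)" using xc by (auto intro: ssumI)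
  qed
qed

lemma independent_Un_span_inter:
  assumes ind: "independent (S \<union> T)" and disj: "S \<inter> T = {}" and x: "x \<in> span S" "x \<in> span T"
  shows "x = 0"
proof -
  let ?R = "representation (S \<union> T) x"
  have RS: "?R = representation S x" and RT: "?R = representation T x"
    by (rule representation_extend[OF ind x(1)] representation_extend[OF ind x(2)]; auto)+
  have zero: "?R b = 0" for b
  proof (rule ccontr)
    assume "?R b \<noteq> 0"
    then have "b \<in> S" "b \<in> T" using representation_ne_zero RS RT by metis+
    then show False using disj by auto
  qed
  have "x \<in> span (S \<union> T)" using x(1) span_mono[of S "S \<union> T"] by auto
  from sum_nonzero_representation_eq[OF ind this] show ?thesis by (simp add: zero)
qed

lemma dim_le_dim_if_subset_span:
  assumes "X \<subseteq> span Y" "finite Y"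
  shows "dim X \<le> dim Y"
proof -
  obtain B where B: "B \<subseteq> Y" "independent B" "Y \<subseteq> span B" "card B = dim Y"
    using basis_exists by blast
  have "X \<subseteq> span B" using assms(1) span_mono[OF B(3)] by (auto simp: span_span)
  with dim_le_card show ?thesis using B(1,4) assms(2) finite_subset by metis
qed

lemma independent_if_card_le_dim:
  assumes "finite S" "card S \<le> dim S"
  shows "independent S"
proof -
  obtain B where B: "B \<subseteq> S" "independent B" "S \<subseteq> span B" "card B = dim S"
    using basis_exists by blast
  then have "B = S" using card_subset_eq[OF assms(1) B(1)] card_mono[OF assms(1) B(1)] assms(2) by simp
  then show ?thesis using B(2) by simp
qed

lemma dim_eq_dim_image_plus_dim_kernel:
  assumes g: "Vector_Spaces.linear scale scale g" and X: "subspace X"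
    and T: "finite T" "X \<subseteq> span T"
  shows "dim X = dim (g ` X) + dim {x \<in> X. g x = 0}"
proof -
  interpret lg: Vector_Spaces.linear scale scale g by (rule g)
  let ?K = "{x \<in> X. g x = 0}"
  obtain bK where bK: "bK \<subseteq> ?K" "independent bK" "?K \<subseteq> span bK"
    using maximal_independent_subset by blast
  obtain bX where bX: "bK \<subseteq> bX" "bX \<subseteq> X" "independent bX" "X \<subseteq> span bX"
    using maximal_independent_subset_extend[of bK X] bK by blast
  have fin: "finite bX" using independent_span_bound[OF T(1) bX(3)] bX(2) T(2) by auto
  let ?P = "bX - bK"
  have inj: "inj_on g (span ?P)"
  proof (subst lg.inj_on_iff_eq_0[OF subspace_span], intro ballI impI)
    fix x assume x: "x \<in> span ?P" "g x = 0"
    have "x \<in> X" using x(1) span_mono[of ?P bX] span_minimal[OF bX(2) X] by auto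
    then have "x \<in> span bK" using x(2) bK(3) by auto
    moreover have "?P \<union> bK = bX" "?P \<inter> bK = {}" using bX(1) by auto
    ultimately show "x = 0" using independent_Un_span_inter[of ?P bK x] x(1) bX(3) by auto
  qed
  have indP: "independent (g ` ?P)"
    by (rule lg.independent_injective_image[OF _ inj]) (use bX(3) independent_mono in auto)
  have injP: "inj_on g ?P" using inj span_superset inj_on_subset by blast
  have "g ` bX \<subseteq> span (g ` ?P)"
  proof
    fix z assume "z \<in> g ` bX"
    then obtain b where b: "b \<in> bX" "z = g b" by blast
    show "z \<in> span (g ` ?P)"
      using b bK(1) span_zero[of "g ` ?P"] span_base[of "g b" "g ` ?P"] by (cases "b \<in> bK") auto
  qed
  then have "span (g ` bX) \<subseteq> span (g ` ?P)"
    by (simp add: span_minimal)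
  then have "g ` X \<subseteq> span (g ` ?P)"
    using bX(4) lg.span_image by blast
  then have "dim (g ` X) = card ?P"
    using basis_card_eq_dim[of "g ` ?P" "g ` X"] indP bX(2) card_image[OF injP] by fastforce
  moreover have "dim X = card bX" "dim ?K = card bK"
    using basis_card_eq_dim bX bK by auto
  ultimately show ?thesis using card_Diff_subset[OF finite_subset[OF bX(1) fin] bX(1)]
      card_mono[OF fin bX(1)] by simp
qed

lemma independent_Un_image_if_dim_eq:
  assumes Y: "finite Y" and C: "finite C" and h: "Vector_Spaces.linear scale scale h"
    and dim: "dim (Y \<union> h ` C) = card Y + card C"
    and T: "T \<subseteq> span C" "independent T"
  shows "independent (Y \<union> h ` T)" "Y \<inter> h ` T = {}" "inj_on h T"
proof -
  interpret h: Vector_Spaces.linear scale scale h by (rule h)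
  obtain T' where T': "T \<subseteq> T'" "T' \<subseteq> span C" "independent T'" "span C \<subseteq> span T'"
    using maximal_independent_subset_extend[OF T(1) T(2)] by blast
  have fT': "finite T'" and cT': "card T' \<le> card C"
    using independent_span_bound[OF C T'(3) T'(2)] by auto
  let ?S = "Y \<union> h ` T'"
  have fS: "finite ?S" using Y fT' by simp
  have "h ` C \<subseteq> h ` span T'" using T'(4) span_superset by blast
  also have "\<dots> = span (h ` T')" using h.span_image by simp
  also have "\<dots> \<subseteq> span ?S" by (rule span_mono) auto
  finally have "Y \<union> h ` C \<subseteq> span ?S" by (auto intro: span_base)
  then have "dim (Y \<union> h ` C) \<le> dim ?S" using dim_le_dim_if_subset_span fS by blast
  moreover have "card ?S \<le> card Y + card (h ` T')" "card (h ` T') \<le> card T'" "dim ?S \<le> card ?S"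
    using card_Un_le card_image_le fT' dim_le_card' fS by blast+
  ultimately have eqs: "card ?S = card Y + card (h ` T')" "card (h ` T') = card T'"
    "card ?S \<le> dim ?S"
    using dim cT' by linarith+
  have "independent ?S" using independent_if_card_le_dim[OF fS eqs(3)] .
  then show "independent (Y \<union> h ` T)" by (rule independent_mono) (use T'(1) in auto)
  have "card (Y \<inter> h ` T') = 0" using card_Un_Int[of Y "h ` T'"] Y fT' eqs(1) by simp
  then show "Y \<inter> h ` T = {}" using Y T'(1) by auto
  show "inj_on h T" using inj_on_iff_eq_card[OF fT'] eqs(2) inj_on_subset T'(1) by blast
qed

end

section \<open>The model of the exterior square\<close>

locale wedge_model = vs: vector_space sc for sc :: "'a::field \<Rightarrow> 'v::ab_group_add \<Rightarrow> 'v"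
begin

sublocale e: vector_space "esc :: 'a \<Rightarrow> ('a, 'v) ext2 \<Rightarrow> _"
  by unfold_locales (auto simp: esc_def fun_eq_iff algebra_simps)
sublocale fl: vector_space "(*) :: 'a \<Rightarrow> 'a \<Rightarrow> 'a"
  by unfold_locales (auto simp: algebra_simps)
sublocale vf: vector_space_pair sc "(*) :: 'a \<Rightarrow> 'a \<Rightarrow> 'a" ..
sublocale vv: vector_space_pair sc sc ..
sublocale ee: vector_space_pair "esc :: 'a \<Rightarrow> ('a, 'v) ext2 \<Rightarrow> _"
    "esc :: 'a \<Rightarrow> ('a, 'v) ext2 \<Rightarrow> _" ..

abbreviation lin_form :: "('v \<Rightarrow> 'a) \<Rightarrow> bool" where
  "lin_form \<equiv> Vector_Spaces.linear sc (*)"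

lemma lin_form_add: "lin_form \<phi> \<Longrightarrow> \<phi> (x + y) = \<phi> x + \<phi> y"
  by (simp add: Vector_Spaces.linear_iff)

lemma lin_form_scale: "lin_form \<phi> \<Longrightarrow> \<phi> (sc c x) = c * \<phi> x"
  by (simp add: Vector_Spaces.linear_iff)

lemma wedge_apply:
  "wedge sc x y (\<phi>, \<psi>) = (if lin_form \<phi> \<and> lin_form \<psi> then \<phi> x * \<psi> y - \<phi> y * \<psi> x else 0)"
  by (simp add: wedge_def)

lemma esc_apply: "esc c F p = c * F p"
  by (simp add: esc_def)

lemma wedge_add_left: "wedge sc (x + x') y = wedge sc x y + wedge sc x' y"
  by (simp add: fun_eq_iff wedge_apply lin_form_add ring_distribs)

lemma wedge_add_right: "wedge sc x (y + y') = wedge sc x y + wedge sc x y'"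
  by (simp add: fun_eq_iff wedge_apply lin_form_add ring_distribs)

lemma wedge_scale_left: "wedge sc (sc c x) y = esc c (wedge sc x y)"
  by (simp add: fun_eq_iff wedge_apply esc_apply lin_form_scale right_diff_distrib)

lemma wedge_scale_right: "wedge sc x (sc c y) = esc c (wedge sc x y)"
  by (simp add: fun_eq_iff wedge_apply esc_apply lin_form_scale right_diff_distrib
      mult.left_commute)

lemma wedge_zero_left: "wedge sc 0 y = 0"
  by (simp add: fun_eq_iff wedge_apply vf.linear_0)

lemma wedge_zero_right: "wedge sc x 0 = 0"
  by (simp add: fun_eq_iff wedge_apply vf.linear_0)

definition wedges :: "'v set \<Rightarrow> ('a, 'v) ext2 set" where
  "wedges X = {wedge sc x y | x y. x \<in> X \<and> y \<in> X}"

lemma Lam2_eq_span_wedges: "Lam2 sc X = e.span (wedges X)"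
  by (simp add: Lam2_def wedges_def)

lemma subspace_Lam2: "e.subspace (Lam2 sc X)"
  by (simp add: Lam2_eq_span_wedges)

lemma wedge_in_Lam2: "x \<in> X \<Longrightarrow> y \<in> X \<Longrightarrow> wedge sc x y \<in> Lam2 sc X"
  unfolding Lam2_eq_span_wedges wedges_def by (rule e.span_base) auto

lemma Lam2_mono: "X \<subseteq> Y \<Longrightarrow> Lam2 sc X \<subseteq> Lam2 sc Y"
  unfolding Lam2_eq_span_wedges wedges_def by (rule e.span_mono) auto

lemma finite_wedges: "finite T \<Longrightarrow> finite (wedges T)"
proof -
  have "wedges T = (\<lambda>(x, y). wedge sc x y) ` (T \<times> T)" by (auto simp: wedges_def)
  then show "finite T \<Longrightarrow> ?thesis" by simp
qed

lemma Lam2_induct [consumes 1, case_names subspace wedge]: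
  assumes "F \<in> Lam2 sc X" "e.subspace {F. P F}"
    "\<And>x y. x \<in> X \<Longrightarrow> y \<in> X \<Longrightarrow> P (wedge sc x y)"
  shows "P F"
  using assms(1) unfolding Lam2_eq_span_wedges
  by (rule e.span_induct) (use assms in \<open>auto simp: wedges_def\<close>)

lemma subspace_CollectI:
  assumes "\<And>F G. P F \<Longrightarrow> P G \<Longrightarrow> P (F + G)" "\<And>c F. P F \<Longrightarrow> P (esc c F)" "P 0"
  shows "e.subspace {F. P F}"
  using assms by (auto simp: e.subspace_def)

lemma subspace_eq_linear:
  fixes L M :: "('a, 'v) ext2 \<Rightarrow> ('a, 'v) ext2"
  assumes "Vector_Spaces.linear esc esc L" "Vector_Spaces.linear esc esc M"
  shows "e.subspace {F. L F = M F}"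
  using ee.linear_add[OF assms(1)] ee.linear_scale[OF assms(1)] ee.linear_0[OF assms(1)]
    ee.linear_add[OF assms(2)] ee.linear_scale[OF assms(2)] ee.linear_0[OF assms(2)]
  by (intro subspace_CollectI) auto

lemma Lam2_image_subset:
  assumes L: "Vector_Spaces.linear esc esc L" and F: "F \<in> Lam2 sc X" and T: "e.subspace T"
    and wedge: "\<And>x y. x \<in> X \<Longrightarrow> y \<in> X \<Longrightarrow> L (wedge sc x y) \<in> T"
  shows "L F \<in> T"
  using F
proof (induction rule: Lam2_induct)
  case subspace
  show ?case using ee.linear_subspace_linear_preimage[OF L T] .
qed (rule wedge)

lemma wedge_in_span_wedges:
  assumes x: "x \<in> vs.span T" and y: "y \<in> vs.span T"
  shows "wedge sc x y \<in> e.span (wedges T)"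
proof -
  let ?S = "e.span (wedges T)"
  have left: "wedge sc a y \<in> ?S" if a: "a \<in> T" and y: "y \<in> vs.span T" for a y
  proof (rule vs.span_induct[OF y, of "\<lambda>y. wedge sc a y \<in> ?S"])
    show "vs.subspace {y. wedge sc a y \<in> ?S}"
      by (rule vs.subspaceI)
        (auto simp: wedge_zero_right wedge_add_right wedge_scale_right e.span_zero e.span_add
          e.span_scale)
  next
    fix y assume "y \<in> T"
    then show "wedge sc a y \<in> ?S" using a by (intro e.span_base) (auto simp: wedges_def)
  qed
  have "\<forall>y\<in>vs.span T. wedge sc x y \<in> ?S"
  proof (rule vs.span_induct[OF x, of "\<lambda>x. \<forall>y\<in>vs.span T. wedge sc x y \<in> ?S"])
    show "vs.subspace {x. \<forall>y\<in>vs.span T. wedge sc x y \<in> ?S}"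
      by (rule vs.subspaceI)
        (auto simp: wedge_zero_left wedge_add_left wedge_scale_left e.span_zero e.span_add
          e.span_scale)
  qed (use left in auto)
  then show ?thesis using y by auto
qed

lemma Lam2_subset_span_wedges: "X \<subseteq> vs.span T \<Longrightarrow> Lam2 sc X \<subseteq> e.span (wedges T)"
proof
  fix F assume X: "X \<subseteq> vs.span T" and F: "F \<in> Lam2 sc X"
  from F show "F \<in> e.span (wedges T)"
    by (induction rule: Lam2_induct) (use X in \<open>auto intro!: wedge_in_span_wedges\<close>)
qed

lemma Lam2_apply_nonlinear: "F \<in> Lam2 sc X \<Longrightarrow> \<not> (lin_form \<phi> \<and> lin_form \<psi>) \<Longrightarrow> F (\<phi>, \<psi>) = 0"
  by (induction rule: Lam2_induct) (auto intro!: subspace_CollectI simp: esc_apply wedge_apply)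

lemma Lam2_apply_swap: "F \<in> Lam2 sc X \<Longrightarrow> F (\<psi>, \<phi>) = - F (\<phi>, \<psi>)"
  by (induction rule: Lam2_induct)
    (auto intro!: subspace_CollectI simp: esc_apply wedge_apply mult.commute)

lemma Lam2_apply_diff_left:
  assumes "F \<in> Lam2 sc X" "lin_form \<phi>1" "lin_form \<phi>2"
  shows "F (\<lambda>v. \<phi>1 v - \<phi>2 v, \<psi>) = F (\<phi>1, \<psi>) - F (\<phi>2, \<psi>)"
  using assms(1)
proof (induction rule: Lam2_induct)
  case subspace
  show ?case by (rule subspace_CollectI) (auto simp: esc_apply right_diff_distrib)
next
  case (wedge x y)
  show ?case using assms(2,3) vf.linear_compose_sub[OF assms(2,3)]
    by (auto simp: wedge_apply algebra_simps)
qed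

lemma Lam2_apply_cong:
  assumes "F \<in> Lam2 sc X" "lin_form \<phi>1" "lin_form \<phi>2" "lin_form \<psi>1" "lin_form \<psi>2"
    "\<forall>x\<in>X. \<phi>1 x = \<phi>2 x" "\<forall>x\<in>X. \<psi>1 x = \<psi>2 x"
  shows "F (\<phi>1, \<psi>1) = F (\<phi>2, \<psi>2)"
  using assms
  by (induction rule: Lam2_induct) (auto intro!: subspace_CollectI simp: esc_apply wedge_apply)

lemma Lam2_apply_vanishing:
  assumes F: "F \<in> Lam2 sc X" and \<phi>: "lin_form \<phi>" "\<forall>x\<in>X. \<phi> x = 0"
  shows "F (\<phi>, \<psi>) = 0"
proof (cases "lin_form \<psi>")
  case True
  have "F (\<phi>, \<psi>) = F (\<lambda>v. 0, \<psi>)"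
    using Lam2_apply_cong[OF F \<phi>(1) vf.linear_zero True True] \<phi>(2) by auto
  also have "\<dots> = 0"
    using F by (induction rule: Lam2_induct) (auto intro!: subspace_CollectI simp: esc_apply wedge_apply)
  finally show ?thesis .
qed (use F Lam2_apply_nonlinear in blast)

text \<open>On the model, \<open>\<Lambda>\<^sup>2 p\<close> and the derivation \<open>g\<^sup>~\<close> act by precomposing the forms with \<open>p\<close>, resp. by
  precomposing one form at a time with \<open>g\<close>.\<close>

definition push :: "('v \<Rightarrow> 'v) \<Rightarrow> ('a, 'v) ext2 \<Rightarrow> ('a, 'v) ext2" where
  "push p F = (\<lambda>(\<phi>, \<psi>). if lin_form \<phi> \<and> lin_form \<psi> then F (\<phi> \<circ> p, \<psi> \<circ> p) else 0)"

definition der :: "('v \<Rightarrow> 'v) \<Rightarrow> ('a, 'v) ext2 \<Rightarrow> ('a, 'v) ext2" where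
  "der g F = (\<lambda>(\<phi>, \<psi>). if lin_form \<phi> \<and> lin_form \<psi> then F (\<phi> \<circ> g, \<psi>) + F (\<phi>, \<psi> \<circ> g) else 0)"

lemma linear_push: "Vector_Spaces.linear esc esc (push p)"
  unfolding Vector_Spaces.linear_iff
  by (auto simp: e.vector_space_axioms push_def fun_eq_iff esc_apply)

lemma linear_der: "Vector_Spaces.linear esc esc (der g)"
  unfolding Vector_Spaces.linear_iff
  by (auto simp: e.vector_space_axioms der_def fun_eq_iff esc_apply algebra_simps)

lemma push_wedge:
  "Vector_Spaces.linear sc sc p \<Longrightarrow> push p (wedge sc x y) = wedge sc (p x) (p y)"
  by (auto simp: fun_eq_iff push_def wedge_apply Vector_Spaces.linear_compose)

lemma der_wedge:
  "Vector_Spaces.linear sc sc g \<Longrightarrow> der g (wedge sc x y) = wedge sc (g x) y + wedge sc x (g y)"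
  by (auto simp: fun_eq_iff der_def wedge_apply Vector_Spaces.linear_compose algebra_simps)

lemma linear_retraction_exists:
  assumes X: "vs.subspace X"
  obtains p where "Vector_Spaces.linear sc sc p" "\<And>v. p v \<in> X" "\<And>x. x \<in> X \<Longrightarrow> p x = x"
proof -
  obtain bX where b: "bX \<subseteq> X" "vs.independent bX" "X \<subseteq> vs.span bX"
    using vs.maximal_independent_subset by blast
  have sp: "vs.span bX = X" using b X by (simp add: vs.span_subspace)
  let ?p = "vv.construct bX id"
  have l: "Vector_Spaces.linear sc sc ?p" by (rule vv.linear_construct[OF b(2)])
  have "?p v \<in> X" for v using vv.construct_in_span[OF b(2), of id v] sp by simp
  moreover have "?p x = x" if "x \<in> X" for x
    using vv.linear_eq_on[OF l vs.linear_ident, of x bX] that sp vv.construct_basis[OF b(2)] by auto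
  ultimately show ?thesis using l that by blast
qed

lemma push_in_Lam2:
  assumes "Vector_Spaces.linear sc sc p" "\<And>v. p v \<in> X" and "F \<in> Lam2 sc Y"
  shows "push p F \<in> Lam2 sc X"
  by (rule Lam2_image_subset[OF linear_push assms(3) subspace_Lam2])
    (simp add: push_wedge assms wedge_in_Lam2)

lemma push_fixes_Lam2:
  assumes "Vector_Spaces.linear sc sc p" "\<And>x. x \<in> X \<Longrightarrow> p x = x" and "F \<in> Lam2 sc X"
  shows "push p F = F"
  using assms(3)
  by (induction rule: Lam2_induct)
    (simp_all add: subspace_eq_linear[OF linear_push e.linear_id[unfolded id_def]] push_wedge assms)

text \<open>For a retraction \<open>p\<close> onto \<open>X\<close>, the forms \<open>\<phi>\<close> and \<open>\<phi> \<circ> p\<close> differ by a form vanishing on \<open>X\<close>,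
  so \<open>F = push p F \<in> Lam2 sc X\<close>.\<close>

lemma Lam2_if_annihilated:
  assumes F: "F \<in> Lam2 sc Y" and X: "vs.subspace X"
    and ann: "\<And>\<phi> \<psi>. lin_form \<phi> \<Longrightarrow> lin_form \<psi> \<Longrightarrow> \<forall>x\<in>X. \<phi> x = 0 \<Longrightarrow> F (\<phi>, \<psi>) = 0"
  shows "F \<in> Lam2 sc X"
proof -
  obtain p where p: "Vector_Spaces.linear sc sc p" "\<And>v. p v \<in> X" "\<And>x. x \<in> X \<Longrightarrow> p x = x"
    using linear_retraction_exists[OF X] by blast
  have "F (\<phi>, \<psi>) = F (\<phi> \<circ> p, \<psi> \<circ> p)" if l: "lin_form \<phi>" "lin_form \<psi>" for \<phi> \<psi>
  proof -
    have lp: "lin_form (\<phi> \<circ> p)" "lin_form (\<psi> \<circ> p)"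
      using l p(1) Vector_Spaces.linear_compose by blast+
    have "F (\<lambda>v. \<phi> v - (\<phi> \<circ> p) v, \<psi>) = 0" "F (\<lambda>v. \<psi> v - (\<psi> \<circ> p) v, \<phi> \<circ> p) = 0"
      using l lp p vf.linear_compose_sub[of \<phi> "\<phi> \<circ> p"] vf.linear_compose_sub[of \<psi> "\<psi> \<circ> p"]
      by (auto intro!: ann)
    then have "F (\<phi>, \<psi>) = F (\<phi> \<circ> p, \<psi>)" "F (\<psi>, \<phi> \<circ> p) = F (\<psi> \<circ> p, \<phi> \<circ> p)"
      using Lam2_apply_diff_left[OF F l(1) lp(1), of \<psi>]
        Lam2_apply_diff_left[OF F l(2) lp(2), of "\<phi> \<circ> p"] by simp_all
    then show ?thesis using Lam2_apply_swap[OF F, of "\<phi> \<circ> p"] by metis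
  qed
  then have "F = push p F"
    by (auto simp: fun_eq_iff push_def Lam2_apply_nonlinear[OF F])
  then show ?thesis using push_in_Lam2[OF p(1,2) F] by simp
qed

lemma tilde_eq_der:
  assumes g: "Vector_Spaces.linear sc sc g" and eq: "\<forall>x\<in>X. f x = g x" and F: "F \<in> Lam2 sc X"
  shows "tilde sc f X F = der g F"
proof -
  let ?P = "\<lambda>L. Vector_Spaces.linear esc esc L \<and>
     (\<forall>x\<in>X. \<forall>y\<in>X. L (wedge sc x y) = wedge sc (f x) y + wedge sc x (f y))"
  have "?P (der g)" using linear_der der_wedge[OF g] eq by auto
  then have P: "?P (tilde sc f X)" unfolding tilde_def by (rule someI[of ?P])
  from F show ?thesis
    by (induction rule: Lam2_induct)
      (use P der_wedge[OF g] eq subspace_eq_linear[OF _ linear_der] in auto)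
qed

lemma Lam2_retraction_exists:
  assumes X: "vs.subspace X"
  obtains r :: "('a, 'v) ext2 \<Rightarrow> ('a, 'v) ext2" where "Vector_Spaces.linear esc esc r"
    "\<And>F Y. F \<in> Lam2 sc Y \<Longrightarrow> r F = 0 \<longleftrightarrow> F \<in> Lam2 sc X"
proof -
  obtain p where p: "Vector_Spaces.linear sc sc p" "\<And>v. p v \<in> X" "\<And>x. x \<in> X \<Longrightarrow> p x = x"
    using linear_retraction_exists[OF X] by blast
  define r where "r F = F - push p F" for F
  show ?thesis
  proof (rule that[of r])
    show "Vector_Spaces.linear esc esc r"
      unfolding r_def by (rule ee.linear_compose_sub[OF e.linear_ident linear_push])
    show "r F = 0 \<longleftrightarrow> F \<in> Lam2 sc X" if "F \<in> Lam2 sc Y" for F Y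
      using push_in_Lam2[OF p(1,2) that] push_fixes_Lam2[OF p(1,3)] unfolding r_def
      by (metis eq_iff_diff_eq_0)
  qed
qed

lemma linear_on_extends:
  assumes A: "vs.subspace A" and f: "linear_on sc A f"
  obtains g where "Vector_Spaces.linear sc sc g" "\<And>x. x \<in> A \<Longrightarrow> f x = g x"
proof -
  obtain bA where bA: "bA \<subseteq> A" "vs.independent bA" "A \<subseteq> vs.span bA"
    using vs.maximal_independent_subset by blast
  obtain g where g: "Vector_Spaces.linear sc sc g" "\<forall>x\<in>bA. g x = f x"
    using vv.linear_independent_extend[OF bA(2)] by blast
  have "f 0 = 0"
    using f vs.subspace_0[OF A] unfolding linear_on_def by (metis add_cancel_right_right)
  then have "vs.subspace {x \<in> A. f x = g x}"
    using f A vv.linear_0[OF g(1)] vv.linear_add[OF g(1)] vv.linear_scale[OF g(1)]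
    unfolding linear_on_def vs.subspace_def by auto
  then have "vs.span bA \<subseteq> {x \<in> A. f x = g x}"
    using bA(1) g(2) by (intro vs.span_minimal) auto
  then show ?thesis using that g(1) bA(3) by blast
qed

end

section \<open>Free pseudosolutions\<close>

text \<open>
  \<open>bB\<close> is a basis of \<open>B\<close>, extended by \<open>bC\<close> to a basis of \<open>A\<close>, so that \<open>CC = span bC\<close> is a complement
  of \<open>B\<close> in \<open>A\<close>; \<open>bW\<close> is a basis of \<open>WW = A + g B\<close>, \<open>UU = A + g A\<close>, \<open>der g\<close> is \<open>g\<^sup>~\<close>, and \<open>NU\<close> is the
  relation space of the free pseudosolution.
\<close>

locale free_pseudosolution = wedge_model sc for sc :: "'a::field \<Rightarrow> 'v::ab_group_add \<Rightarrow> 'v" +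
  fixes A B bB bC bW :: "'v set" and g :: "'v \<Rightarrow> 'v" and NV :: "('a, 'v) ext2 set"
  assumes subspace_A: "vs.subspace A" and subspace_B: "vs.subspace B"
    and finite_bB: "finite bB" and finite_bC: "finite bC"
    and independent_bB_bC: "vs.independent (bB \<union> bC)" and disjoint_bB_bC: "bB \<inter> bC = {}"
    and span_bB: "vs.span bB = B" and span_bB_bC: "vs.span (bB \<union> bC) = A"
    and linear_g: "Vector_Spaces.linear sc sc g"
    and subspace_NV: "e.subspace NV"
    and der_N_B: "\<And>n. n \<in> NV \<Longrightarrow> n \<in> Lam2 sc B \<Longrightarrow> der g n \<in> NV"
    and finite_bW: "finite bW" and independent_bW: "vs.independent bW"
    and span_bW: "vs.span bW = ssum A (g ` B)"
    and free: "int (vs.dim (ssum A (g ` A))) - int (vs.dim (ssum A (g ` B))) = int (card bC)"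
begin

definition "CC = vs.span bC"
definition "WW = ssum A (g ` B)"
definition "UU = ssum A (g ` A)"
definition "NU = ssum (NV \<inter> Lam2 sc WW) (der g ` (NV \<inter> Lam2 sc A))"

lemma g_span: "g ` vs.span S = vs.span (g ` S)"
  using vv.linear_span_image[OF linear_g] by simp

lemma g_zero: "g 0 = 0"
  using vv.linear_0[OF linear_g] .

lemma g_add: "g (x + y) = g x + g y"
  using vv.linear_add[OF linear_g] .

lemma A_eq_ssum_B_CC: "A = ssum B CC"
  using vs.span_Un_eq_ssum[of bB bC] span_bB_bC span_bB by (simp add: CC_def)

lemma B_subset_A: "B \<subseteq> A"
  using span_bB span_bB_bC vs.span_mono[of bB "bB \<union> bC"] by auto

lemma CC_subset_A: "CC \<subseteq> A"
  using span_bB_bC vs.span_mono[of bC "bB \<union> bC"] by (auto simp: CC_def)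

lemma subspace_CC: "vs.subspace CC"
  by (simp add: CC_def)

lemma B_inter_CC_zero: "x \<in> B \<Longrightarrow> x \<in> CC \<Longrightarrow> x = 0"
  using vs.independent_Un_span_inter[OF independent_bB_bC disjoint_bB_bC] span_bB
  by (auto simp: CC_def)

lemma span_bW_eq_WW: "vs.span bW = WW"
  using span_bW by (simp add: WW_def)

lemma subspace_WW: "vs.subspace WW"
  using span_bW_eq_WW vs.subspace_span by metis

lemma UU_eq_span: "UU = vs.span (bB \<union> bC \<union> g ` (bB \<union> bC))"
  using vs.span_Un_eq_ssum[of "bB \<union> bC" "g ` (bB \<union> bC)"]
  by (simp add: UU_def span_bB_bC g_span[symmetric])

lemma subspace_UU: "vs.subspace UU"
  by (simp add: UU_eq_span)

lemma A_subset_WW: "A \<subseteq> WW"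
  using subset_ssum_left[of "g ` B" A] vs.subspace_0[OF subspace_B] g_zero
  by (force simp: WW_def)

lemma g_in_WW: "b \<in> B \<Longrightarrow> g b \<in> WW"
  using ssumI[of 0 A "g b" "g ` B"] subspace_A by (simp add: WW_def vs.subspace_0)

lemma WW_subset_UU: "WW \<subseteq> UU"
  unfolding WW_def UU_def ssum_def using B_subset_A by blast

lemma g_in_UU: "a \<in> A \<Longrightarrow> g a \<in> UU"
  using ssumI[of 0 A "g a" "g ` A"] subspace_A by (simp add: UU_def vs.subspace_0)

lemma UU_eq_span_bW_g_bC: "UU = vs.span (bW \<union> g ` bC)"
proof -
  have "vs.span (bW \<union> g ` bC) = vs.span (bB \<union> bC \<union> g ` (bB \<union> bC))"
  proof (subst vs.span_eq, intro conjI)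
    have "bW \<subseteq> UU" using WW_subset_UU span_bW_eq_WW vs.span_superset by blast
    moreover have "g ` bC \<subseteq> UU" using g_in_UU CC_subset_A vs.span_superset
      by (auto simp: CC_def)
    ultimately show "bW \<union> g ` bC \<subseteq> vs.span (bB \<union> bC \<union> g ` (bB \<union> bC))" using UU_eq_span by auto
    have "bB \<union> bC \<subseteq> vs.span bW" using A_subset_WW span_bB_bC span_bW_eq_WW vs.span_superset by blast
    moreover have "g ` bB \<subseteq> vs.span bW"
      using g_in_WW span_bB span_bW_eq_WW vs.span_superset by blast
    moreover have "g ` bC \<subseteq> vs.span (bW \<union> g ` bC)" by (auto intro: vs.span_base)
    moreover have "vs.span bW \<subseteq> vs.span (bW \<union> g ` bC)" by (rule vs.span_mono) auto
    ultimately show "bB \<union> bC \<union> g ` (bB \<union> bC) \<subseteq> vs.span (bW \<union> g ` bC)" by blast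
  qed
  then show ?thesis using UU_eq_span by simp
qed

lemma dim_WW: "vs.dim WW = card bW"
  using vs.dim_eq_card_independent[OF independent_bW] span_bW_eq_WW vs.dim_span[of bW] by simp

lemma dim_bW_g_bC: "vs.dim (bW \<union> g ` bC) = card bW + card bC"
  using UU_eq_span_bW_g_bC vs.dim_span[of "bW \<union> g ` bC"] free dim_WW
  by (simp add: UU_def WW_def)

lemma independent_bW_g:
  assumes "T \<subseteq> CC" "vs.independent T"
  shows "vs.independent (bW \<union> g ` T)" "bW \<inter> g ` T = {}" "inj_on g T"
  using vs.independent_Un_image_if_dim_eq[OF finite_bW finite_bC linear_g dim_bW_g_bC] assms
  by (auto simp: CC_def)

lemma independent_bB:
  assumes "T \<subseteq> CC" "vs.independent T"
  shows "vs.independent (bB \<union> T)" "bB \<inter> T = {}"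
proof -
  have "vs.dim (bB \<union> id ` bC) = card bB + card bC"
    using vs.dim_eq_card_independent[OF independent_bB_bC] disjoint_bB_bC finite_bB finite_bC
    by (simp add: card_Un_disjoint)
  from vs.independent_Un_image_if_dim_eq[OF finite_bB finite_bC vs.linear_id this] assms
  show "vs.independent (bB \<union> T)" "bB \<inter> T = {}" by (auto simp: CC_def)
qed

lemma forms_adapted_to_g:
  assumes "lin_form \<phi>" "lin_form \<psi>"
  obtains \<phi>' \<psi>' where "lin_form \<phi>'" "lin_form \<psi>'"
    "\<And>w. w \<in> WW \<Longrightarrow> \<phi>' w = 0" "\<And>w. w \<in> WW \<Longrightarrow> \<psi>' w = \<psi> w"
    "\<And>c. c \<in> CC \<Longrightarrow> \<phi>' (g c) = \<phi> c"
proof -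
  have ind: "vs.independent (bW \<union> g ` bC)" and disj: "bW \<inter> g ` bC = {}" and inj: "inj_on g bC"
    using independent_bW_g[of bC] independent_bB_bC vs.independent_mono[of "bB \<union> bC" bC]
    by (auto simp: CC_def intro: vs.span_base)
  define S where "S = bW \<union> g ` bC"
  define \<phi>' where "\<phi>' = vf.construct S (\<lambda>s. if s \<in> bW then 0 else \<phi> (the_inv_into bC g s))"
  define \<psi>' where "\<psi>' = vf.construct S (\<lambda>s. if s \<in> bW then \<psi> s else 0)"
  have indS: "vs.independent S" using ind by (simp add: S_def)
  have cb: "\<And>F b. b \<in> S \<Longrightarrow> vf.construct S F b = F b" using vf.construct_basis[OF indS] by blast
  have l': "lin_form \<phi>'" "lin_form \<psi>'"
    unfolding \<phi>'_def \<psi>'_def using vf.linear_construct[OF indS] by auto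
  show ?thesis
  proof (rule that[OF l'])
    fix w assume "w \<in> WW"
    then have w: "w \<in> vs.span bW" using span_bW_eq_WW by simp
    have bWS: "b \<in> S" if "b \<in> bW" for b using that by (simp add: S_def)
    show "\<phi>' w = 0"
      using vf.linear_eq_on[OF l'(1) vf.linear_zero w] by (simp add: \<phi>'_def cb bWS)
    show "\<psi>' w = \<psi> w"
      using vf.linear_eq_on[OF l'(2) assms(2) w] by (simp add: \<psi>'_def cb bWS)
  next
    fix c assume "c \<in> CC"
    have "(\<phi>' \<circ> g) c = \<phi> c"
    proof (rule vf.linear_eq_on[OF Vector_Spaces.linear_compose[OF linear_g l'(1)] assms(1)])
      show "c \<in> vs.span bC" using \<open>c \<in> CC\<close> by (simp add: CC_def)
      fix b assume b: "b \<in> bC"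
      then have "g b \<in> S" "g b \<notin> bW" using disj by (auto simp: S_def)
      then show "(\<phi>' \<circ> g) b = \<phi> b" using b inj by (simp add: \<phi>'_def cb the_inv_into_f_f)
    qed
    then show "\<phi>' (g c) = \<phi> c" by simp
  qed
qed

context
  fixes D assumes D: "vs.subspace D" "D \<subseteq> CC"
begin

lemma subspace_ssum_B_D: "vs.subspace (ssum B D)"
  using vs.subspace_ssum subspace_B D(1) by blast

lemma subspace_ssum_WW_g_D: "vs.subspace (ssum WW (g ` D))"
  using vs.subspace_ssum[OF subspace_WW vv.linear_subspace_image[OF linear_g D(1)]] .

lemma ssum_B_D_subset_A: "ssum B D \<subseteq> A"
  using A_eq_ssum_B_CC D(2) by (auto simp: ssum_def)

lemma ssum_WW_g_D_subset_UU: "ssum WW (g ` D) \<subseteq> UU"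
  using WW_subset_UU g_in_UU CC_subset_A D(2) vs.subspace_add[OF subspace_UU]
  by (force elim!: ssumE)

lemma B_subset_ssum_B_D: "B \<subseteq> ssum B D"
  using subset_ssum_left vs.subspace_0[OF D(1)] .

lemma D_subset_ssum_B_D: "D \<subseteq> ssum B D"
  using subset_ssum_right vs.subspace_0[OF subspace_B] .

lemma WW_subset_ssum_WW_g_D: "WW \<subseteq> ssum WW (g ` D)"
  using subset_ssum_left[of "g ` D" WW] vs.subspace_0[OF D(1)] g_zero by force

lemma ssum_B_D_subset_ssum_WW_g_D:
  assumes "x \<in> ssum B D"
  shows "x \<in> ssum WW (g ` D)" "g x \<in> ssum WW (g ` D)"
proof -
  show "x \<in> ssum WW (g ` D)"
    using assms ssum_B_D_subset_A A_subset_WW WW_subset_ssum_WW_g_D by blast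
  from assms obtain b d where "b \<in> B" "d \<in> D" "x = b + d" by (auto elim: ssumE)
  then show "g x \<in> ssum WW (g ` D)" using g_in_WW g_add by (auto intro: ssumI)
qed

lemma der_in_Lam2_ssum_WW_g_D:
  assumes "n \<in> Lam2 sc (ssum B D)"
  shows "der g n \<in> Lam2 sc (ssum WW (g ` D))"
proof (rule Lam2_image_subset[OF linear_der assms subspace_Lam2])
  fix x y assume "x \<in> ssum B D" "y \<in> ssum B D"
  then show "der g (wedge sc x y) \<in> Lam2 sc (ssum WW (g ` D))"
    unfolding der_wedge[OF linear_g]
    by (intro e.subspace_add[OF subspace_Lam2] wedge_in_Lam2 ssum_B_D_subset_ssum_WW_g_D)
qed

text \<open>The converse: a form \<open>\<phi>\<close> vanishing on \<open>B + D\<close> is transported, via \<open>forms_adapted_to_g\<close>,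
  to a form vanishing on \<open>WW + g D\<close> which annihilates \<open>der g n\<close>; only the term in which \<open>g\<close>
  acts on \<open>\<phi>'\<close> survives, and it equals \<open>n (\<phi>, \<psi>)\<close>.\<close>

lemma in_Lam2_ssum_B_D_if_der:
  assumes n: "n \<in> Lam2 sc A" and dn: "der g n \<in> Lam2 sc (ssum WW (g ` D))"
  shows "n \<in> Lam2 sc (ssum B D)"
proof (rule Lam2_if_annihilated[OF n subspace_ssum_B_D])
  fix \<phi> \<psi> assume l: "lin_form \<phi>" "lin_form \<psi>" and z: "\<forall>x\<in>ssum B D. \<phi> x = 0"
  obtain \<phi>' \<psi>' where l': "lin_form \<phi>'" "lin_form \<psi>'" and \<phi>'W: "\<And>w. w \<in> WW \<Longrightarrow> \<phi>' w = 0"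
    and \<psi>'W: "\<And>w. w \<in> WW \<Longrightarrow> \<psi>' w = \<psi> w" and \<phi>'g: "\<And>c. c \<in> CC \<Longrightarrow> \<phi>' (g c) = \<phi> c"
    using forms_adapted_to_g[OF l] by blast
  have "\<phi>' x = 0" if "x \<in> ssum WW (g ` D)" for x
  proof -
    from that obtain w d where "w \<in> WW" "d \<in> D" "x = w + g d" by (auto elim: ssumE)
    then show ?thesis using z D_subset_ssum_B_D \<phi>'W \<phi>'g D(2) lin_form_add[OF l'(1)] by force
  qed
  then have "der g n (\<phi>', \<psi>') = 0" using Lam2_apply_vanishing[OF dn l'(1)] by blast
  moreover have "n (\<phi>', \<psi>' \<circ> g) = 0"
    using Lam2_apply_vanishing[OF n l'(1)] \<phi>'W A_subset_WW by auto
  moreover have "n (\<phi>' \<circ> g, \<psi>') = n (\<phi>, \<psi>)"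
  proof (rule Lam2_apply_cong[OF n Vector_Spaces.linear_compose[OF linear_g l'(1)] l(1) l'(2) l(2)])
    show "\<forall>x\<in>A. (\<phi>' \<circ> g) x = \<phi> x"
    proof
      fix a assume "a \<in> A"
      then obtain b c where bc: "b \<in> B" "c \<in> CC" "a = b + c"
        using A_eq_ssum_B_CC by (auto elim: ssumE)
      then have "\<phi> b = 0" using z B_subset_ssum_B_D by auto
      then show "(\<phi>' \<circ> g) a = \<phi> a"
        using bc g_add lin_form_add[OF l'(1)] lin_form_add[OF l(1)] \<phi>'W[OF g_in_WW[OF bc(1)]]
          \<phi>'g[OF bc(2)] by simp
    qed
    show "\<forall>x\<in>A. \<psi>' x = \<psi> x" using \<psi>'W A_subset_WW by auto
  qed
  ultimately show "n (\<phi>, \<psi>) = 0" by (simp add: der_def l')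
qed

end

lemma der_in_Lam2_WW_iff:
  assumes "n \<in> Lam2 sc A"
  shows "der g n \<in> Lam2 sc WW \<longleftrightarrow> n \<in> Lam2 sc B"
  using in_Lam2_ssum_B_D_if_der[of "{0}" n] der_in_Lam2_ssum_WW_g_D[of "{0}" n] assms
  by (auto simp: g_zero ssum_zero_right CC_def vs.span_zero)

lemma subspace_N: "e.subspace (NV \<inter> Lam2 sc X)"
  using e.subspace_inter[OF subspace_NV subspace_Lam2] .

lemma subspace_NU: "e.subspace NU"
  unfolding NU_def
  using e.subspace_ssum[OF subspace_N ee.linear_subspace_image[OF linear_der subspace_N]] .

lemma der_N_A_subset_NU: "n \<in> NV \<inter> Lam2 sc A \<Longrightarrow> der g n \<in> NU"
  unfolding NU_def using ssumI[of 0 "NV \<inter> Lam2 sc WW" "der g n"] e.subspace_0[OF subspace_N]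
  by simp

lemma NU_inter_Lam2_WW: "NU \<inter> Lam2 sc WW = NV \<inter> Lam2 sc WW"
proof
  show "NV \<inter> Lam2 sc WW \<subseteq> NU \<inter> Lam2 sc WW"
  proof
    fix w assume "w \<in> NV \<inter> Lam2 sc WW"
    moreover have "der g 0 \<in> der g ` (NV \<inter> Lam2 sc A)" using e.subspace_0[OF subspace_N] by blast
    ultimately have "w + der g 0 \<in> NU" unfolding NU_def by (rule ssumI)
    then show "w \<in> NU \<inter> Lam2 sc WW" using \<open>w \<in> NV \<inter> Lam2 sc WW\<close> ee.linear_0[OF linear_der]
      by simp
  qed
  show "NU \<inter> Lam2 sc WW \<subseteq> NV \<inter> Lam2 sc WW"
  proof
    fix m assume m: "m \<in> NU \<inter> Lam2 sc WW"
    then obtain w n where wn: "w \<in> NV \<inter> Lam2 sc WW" "n \<in> NV \<inter> Lam2 sc A" "m = w + der g n"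
      by (auto simp: NU_def elim!: ssumE)
    have "der g n = m - w" using wn(3) by simp
    then have "der g n \<in> Lam2 sc WW" using e.subspace_diff[OF subspace_Lam2] m wn(1) by auto
    then have "der g n \<in> NV" using der_N_B der_in_Lam2_WW_iff wn(2) by blast
    then show "m \<in> NV \<inter> Lam2 sc WW" using m wn e.subspace_add[OF subspace_NV] by auto
  qed
qed

context
  fixes D assumes D: "vs.subspace D" "D \<subseteq> CC"
begin

context
  fixes r :: "('a, 'v) ext2 \<Rightarrow> ('a, 'v) ext2"
  assumes r_kernel: "\<And>F Y. F \<in> Lam2 sc Y \<Longrightarrow> r F = 0 \<longleftrightarrow> F \<in> Lam2 sc WW"
begin

lemma kernel_on_NU:
  "{m \<in> NU \<inter> Lam2 sc (ssum WW (g ` D)). r m = 0} = NV \<inter> Lam2 sc WW"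
proof -
  have "{m \<in> NU \<inter> Lam2 sc (ssum WW (g ` D)). r m = 0} = NU \<inter> Lam2 sc WW"
    using r_kernel Lam2_mono[OF WW_subset_ssum_WW_g_D[OF D]] by auto
  then show ?thesis using NU_inter_Lam2_WW by simp
qed

lemma kernel_on_N:
  "{n \<in> NV \<inter> Lam2 sc (ssum B D). r (der g n) = 0} = NV \<inter> Lam2 sc B"
proof -
  have "der g n \<in> Lam2 sc WW \<longleftrightarrow> n \<in> Lam2 sc B" if "n \<in> Lam2 sc (ssum B D)" for n
    using that der_in_Lam2_WW_iff Lam2_mono[OF ssum_B_D_subset_A[OF D]] by blast
  moreover have "r (der g n) = 0 \<longleftrightarrow> der g n \<in> Lam2 sc WW" if "n \<in> Lam2 sc (ssum B D)" for n
    using r_kernel der_in_Lam2_ssum_WW_g_D[OF D that] by blast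
  ultimately show ?thesis
    using Lam2_mono[OF B_subset_ssum_B_D[OF D]] by auto
qed

lemma image_on_NU:
  assumes r: "Vector_Spaces.linear esc esc r"
  shows "r ` (NU \<inter> Lam2 sc (ssum WW (g ` D))) = (r \<circ> der g) ` (NV \<inter> Lam2 sc (ssum B D))"
proof
  show "r ` (NU \<inter> Lam2 sc (ssum WW (g ` D))) \<subseteq> (r \<circ> der g) ` (NV \<inter> Lam2 sc (ssum B D))"
  proof
    fix y assume "y \<in> r ` (NU \<inter> Lam2 sc (ssum WW (g ` D)))"
    then obtain m where m: "m \<in> NU" "m \<in> Lam2 sc (ssum WW (g ` D))" "y = r m" by auto
    then obtain w n where wn: "w \<in> NV \<inter> Lam2 sc WW" "n \<in> NV \<inter> Lam2 sc A" "m = w + der g n"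
      by (auto simp: NU_def elim!: ssumE)
    have "der g n = m - w" using wn(3) by simp
    then have "der g n \<in> Lam2 sc (ssum WW (g ` D))"
      using m(2) wn(1) Lam2_mono[OF WW_subset_ssum_WW_g_D[OF D]] e.subspace_diff[OF subspace_Lam2]
      by auto
    then have "n \<in> NV \<inter> Lam2 sc (ssum B D)" using in_Lam2_ssum_B_D_if_der[OF D] wn(2) by auto
    moreover have "y = r (der g n)"
      using m(3) wn r_kernel ee.linear_add[OF r] by auto
    ultimately show "y \<in> (r \<circ> der g) ` (NV \<inter> Lam2 sc (ssum B D))" by auto
  qed
  show "(r \<circ> der g) ` (NV \<inter> Lam2 sc (ssum B D)) \<subseteq> r ` (NU \<inter> Lam2 sc (ssum WW (g ` D)))"
  proof
    fix y assume "y \<in> (r \<circ> der g) ` (NV \<inter> Lam2 sc (ssum B D))"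
    then obtain n where n: "n \<in> NV" "n \<in> Lam2 sc (ssum B D)" "y = r (der g n)" by auto
    then have "der g n \<in> NU"
      using der_N_A_subset_NU Lam2_mono[OF ssum_B_D_subset_A[OF D]] by blast
    then show "y \<in> r ` (NU \<inter> Lam2 sc (ssum WW (g ` D)))"
      using n der_in_Lam2_ssum_WW_g_D[OF D] by blast
  qed
qed

end

text \<open>Rank--nullity for the retraction onto \<open>Lam2 sc WW\<close>, applied on both sides: the two images
  agree, and the kernels are \<open>N(WW)\<close> and \<open>N(B)\<close>.\<close>

lemma dim_N_ssum_WW_g_D:
  "e.dim (NU \<inter> Lam2 sc (ssum WW (g ` D))) + e.dim (NV \<inter> Lam2 sc B)
     = e.dim (NV \<inter> Lam2 sc (ssum B D)) + e.dim (NV \<inter> Lam2 sc WW)"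
proof -
  obtain r :: "('a, 'v) ext2 \<Rightarrow> ('a, 'v) ext2" where r: "Vector_Spaces.linear esc esc r"
    and r_kernel: "\<And>F Y. F \<in> Lam2 sc Y \<Longrightarrow> r F = 0 \<longleftrightarrow> F \<in> Lam2 sc WW"
    using Lam2_retraction_exists[OF subspace_WW] by blast
  let ?M = "NU \<inter> Lam2 sc (ssum WW (g ` D))" and ?X = "NV \<inter> Lam2 sc (ssum B D)"
  have "Lam2 sc (ssum WW (g ` D)) \<subseteq> e.span (wedges (bW \<union> g ` bC))"
    by (rule Lam2_subset_span_wedges)
      (use ssum_WW_g_D_subset_UU[OF D] UU_eq_span_bW_g_bC in simp)
  then have "e.dim ?M = e.dim (r ` ?M) + e.dim {m \<in> ?M. r m = 0}"
    using e.dim_eq_dim_image_plus_dim_kernel[OF r e.subspace_inter[OF subspace_NU subspace_Lam2]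
        finite_wedges[of "bW \<union> g ` bC"]] finite_bW finite_bC by blast
  moreover have "Lam2 sc (ssum B D) \<subseteq> e.span (wedges (bB \<union> bC))"
    by (rule Lam2_subset_span_wedges) (use ssum_B_D_subset_A[OF D] span_bB_bC in simp)
  then have "e.dim ?X = e.dim ((r \<circ> der g) ` ?X) + e.dim {n \<in> ?X. (r \<circ> der g) n = 0}"
    using e.dim_eq_dim_image_plus_dim_kernel[OF Vector_Spaces.linear_compose[OF linear_der r]
        subspace_N finite_wedges[of "bB \<union> bC"]] finite_bB finite_bC by blast
  ultimately show ?thesis
    using image_on_NU[OF r_kernel r] kernel_on_NU[OF r_kernel] kernel_on_N[OF r_kernel] by simp
qed

lemma dim_ssum_WW_g_D:
  "int (vs.dim (ssum WW (g ` D))) - int (vs.dim WW) = int (vs.dim (ssum B D)) - int (vs.dim B)"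
proof -
  obtain bD where bD: "bD \<subseteq> D" "vs.independent bD" "D \<subseteq> vs.span bD"
    using vs.maximal_independent_subset by blast
  have span_bD: "vs.span bD = D" using vs.span_subspace[OF bD(1) bD(3) D(1)] .
  have bD_CC: "bD \<subseteq> CC" using bD(1) D(2) by auto
  have finite_bD: "finite bD"
    using vs.independent_span_bound[OF finite_bC bD(2)] bD_CC by (auto simp: CC_def)
  note W = independent_bW_g[OF bD_CC bD(2)] and B = independent_bB[OF bD_CC bD(2)]
  have "ssum WW (g ` D) = vs.span (bW \<union> g ` bD)"
    using vs.span_Un_eq_ssum[of bW "g ` bD"] span_bW_eq_WW g_span[of bD] span_bD by simp
  then have "vs.dim (ssum WW (g ` D)) = card bW + card bD"
    using vs.dim_span_eq_card_independent[OF W(1)] card_Un_disjoint[OF finite_bW _ W(2)]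
      finite_bD card_image[OF W(3)] by simp
  moreover have "ssum B D = vs.span (bB \<union> bD)"
    using vs.span_Un_eq_ssum[of bB bD] span_bB span_bD by simp
  then have "vs.dim (ssum B D) = card bB + card bD"
    using vs.dim_span_eq_card_independent[OF B(1)] card_Un_disjoint[OF finite_bB finite_bD B(2)]
    by simp
  moreover have "vs.dim B = card bB"
    using vs.dim_span_eq_card_independent independent_bB_bC
      vs.independent_mono[of "bB \<union> bC" bB] span_bB by auto
  ultimately show ?thesis using dim_WW by simp
qed

lemma delta_ssum_WW_g_D: "delta sc NU (ssum WW (g ` D)) WW = delta sc NV (ssum B D) B"
  using dim_ssum_WW_g_D dim_N_ssum_WW_g_D NU_inter_Lam2_WW unfolding delta_def Nof_def by simp

end

lemma intermediate_eq_ssum_WW_g: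
  assumes Z: "vs.subspace Z" "WW \<subseteq> Z" "Z \<subseteq> UU"
  obtains D where "vs.subspace D" "D \<subseteq> CC" "Z = ssum WW (g ` D)"
proof
  show "vs.subspace (CC \<inter> g -` Z)"
    using vs.subspace_inter[OF subspace_CC vv.linear_subspace_vimage[OF linear_g Z(1)]] .
  show "CC \<inter> g -` Z \<subseteq> CC" by blast
  show "Z = ssum WW (g ` (CC \<inter> g -` Z))"
  proof
    show "ssum WW (g ` (CC \<inter> g -` Z)) \<subseteq> Z"
      using Z vs.subspace_add[OF Z(1)] by (auto simp: ssum_def)
    show "Z \<subseteq> ssum WW (g ` (CC \<inter> g -` Z))"
    proof
      fix z assume z: "z \<in> Z"
      then obtain a a' where aa: "a \<in> A" "a' \<in> A" "z = a + g a'"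
        using Z(3) by (auto simp: UU_def elim!: ssumE)
      then obtain b c where bc: "b \<in> B" "c \<in> CC" "a' = b + c"
        using A_eq_ssum_B_CC by (auto elim: ssumE)
      have w: "a + g b \<in> WW" unfolding WW_def using aa bc by (intro ssumI) auto
      have z_eq: "z = (a + g b) + g c" using aa bc g_add by (simp add: add.assoc)
      then have "g c \<in> Z" using vs.subspace_diff[OF Z(1) z, of "a + g b"] w Z(2) by auto
      then show "z \<in> ssum WW (g ` (CC \<inter> g -` Z))" using z_eq w bc(2) by (auto intro: ssumI)
    qed
  qed
qed

lemma strong_WW_UU:
  assumes "strong sc NV B A"
  shows "strong sc NU WW UU"
  unfolding strong_def
proof (intro conjI allI impI)
  show "WW \<subseteq> UU" by (rule WW_subset_UU)
  fix Z assume "vs.subspace Z \<and> WW \<subseteq> Z \<and> Z \<subseteq> UU"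
  then obtain D where D: "vs.subspace D" "D \<subseteq> CC" "Z = ssum WW (g ` D)"
    using intermediate_eq_ssum_WW_g by blast
  then show "0 \<le> delta sc NU Z WW"
    using assms delta_ssum_WW_g_D subspace_ssum_B_D B_subset_ssum_B_D ssum_B_D_subset_A
    unfolding strong_def by auto
qed

lemma WW_ne_UU: "B \<noteq> A \<Longrightarrow> WW \<noteq> UU"
proof
  assume "B \<noteq> A" "WW = UU"
  then have "card bC = 0" using free by (simp add: WW_def UU_def)
  then have "bC = {}" using finite_bC by simp
  then show False using \<open>B \<noteq> A\<close> span_bB_bC span_bB by simp
qed

context
  fixes D assumes D: "vs.subspace D" "D \<subseteq> CC"
begin

lemma B_psubset_ssum_B_D: "WW \<subset> ssum WW (g ` D) \<Longrightarrow> B \<subset> ssum B D"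
proof -
  assume "WW \<subset> ssum WW (g ` D)"
  then obtain z where "z \<in> ssum WW (g ` D)" "z \<notin> WW" by blast
  then obtain w d where "w \<in> WW" "d \<in> D" "z = w + g d" "z \<notin> WW" by (auto elim: ssumE)
  then have d: "d \<in> D" "d \<noteq> 0" using g_zero by auto
  then have "d \<notin> B" using B_inter_CC_zero D(2) by auto
  then show "B \<subset> ssum B D" using B_subset_ssum_B_D[OF D] D_subset_ssum_B_D[OF D] d(1) by auto
qed

lemma ssum_WW_g_D_eq_UU: "ssum B D = A \<Longrightarrow> ssum WW (g ` D) = UU"
proof -
  assume eq: "ssum B D = A"
  have "CC \<subseteq> D"
  proof
    fix c assume c: "c \<in> CC"
    then have "c \<in> ssum B D" using eq CC_subset_A by blast
    then obtain b d where bd: "b \<in> B" "d \<in> D" "c = b + d" by (rule ssumE)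
    then have "b \<in> CC" using vs.subspace_diff[OF subspace_CC c, of d] D(2) by auto
    then have "b = 0" using B_inter_CC_zero bd(1) by blast
    then show "c \<in> D" using bd by simp
  qed
  have "UU \<subseteq> ssum WW (g ` D)"
  proof
    fix u assume "u \<in> UU"
    then obtain a a' where aa: "a \<in> A" "a' \<in> A" "u = a + g a'" by (auto simp: UU_def elim!: ssumE)
    then obtain b c where bc: "b \<in> B" "c \<in> CC" "a' = b + c"
      using A_eq_ssum_B_CC by (auto elim: ssumE)
    have "a + g b \<in> WW" unfolding WW_def using aa bc by (intro ssumI) auto
    moreover have "u = (a + g b) + g c" using aa bc g_add by (simp add: add.assoc)
    ultimately show "u \<in> ssum WW (g ` D)" using \<open>CC \<subseteq> D\<close> bc(2) by (auto intro: ssumI)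
  qed
  then show ?thesis using ssum_WW_g_D_subset_UU[OF D] by blast
qed

text \<open>Intermediate spaces \<open>B + D \<subseteq> Y \<subseteq> A\<close> are of the form \<open>B + E\<close> with \<open>D \<subseteq> E \<subseteq> CC\<close>, and
  \<open>delta(Y / (B + D)) = delta((WW + g E) / (WW + g D))\<close>.\<close>

lemma strong_ssum_B_D: "strong sc NU (ssum WW (g ` D)) UU \<Longrightarrow> strong sc NV (ssum B D) A"
  unfolding strong_def
proof (intro conjI allI impI)
  assume strongZ: "ssum WW (g ` D) \<subseteq> UU \<and> (\<forall>Z. vs.subspace Z \<and> ssum WW (g ` D) \<subseteq> Z \<and> Z \<subseteq> UU
    \<longrightarrow> 0 \<le> delta sc NU Z (ssum WW (g ` D)))"
  show "ssum B D \<subseteq> A" by (rule ssum_B_D_subset_A[OF D])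
  fix Y assume Y: "vs.subspace Y \<and> ssum B D \<subseteq> Y \<and> Y \<subseteq> A"
  define E where "E = CC \<inter> Y"
  have E: "vs.subspace E" "E \<subseteq> CC" "D \<subseteq> E"
    using vs.subspace_inter[OF subspace_CC] Y D D_subset_ssum_B_D[OF D] by (auto simp: E_def)
  have Y_eq: "Y = ssum B E"
    using vs.ssum_inter_eq[of Y B CC] Y B_subset_ssum_B_D[OF D] A_eq_ssum_B_CC
    by (auto simp: E_def Int_commute)
  have "ssum WW (g ` D) \<subseteq> ssum WW (g ` E)" using \<open>D \<subseteq> E\<close> by (auto simp: ssum_def)
  then have "0 \<le> delta sc NU (ssum WW (g ` E)) (ssum WW (g ` D))"
    using strongZ[THEN conjunct2, rule_format, of "ssum WW (g ` E)"]
      subspace_ssum_WW_g_D[OF E(1,2)] ssum_WW_g_D_subset_UU[OF E(1,2)] by blast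
  also have "delta sc NU (ssum WW (g ` E)) (ssum WW (g ` D)) = delta sc NV Y (ssum B D)"
    using delta_diff[of sc NU "ssum WW (g ` E)" "ssum WW (g ` D)" WW]
      delta_diff[of sc NV Y "ssum B D" B] Y_eq delta_ssum_WW_g_D[OF E(1,2)] delta_ssum_WW_g_D[OF D]
    by simp
  finally show "0 \<le> delta sc NV Y (ssum B D)" .
qed

end

lemma minimal_strong_WW_UU:
  assumes "minimal_strong sc NV B A"
  shows "minimal_strong sc NU WW UU"
  unfolding minimal_strong_def
proof (intro conjI notI)
  show "strong sc NU WW UU" using assms strong_WW_UU by (simp add: minimal_strong_def)
  show "WW = UU \<Longrightarrow> False" using assms WW_ne_UU by (simp add: minimal_strong_def)
  assume "\<exists>Z. vs.subspace Z \<and> WW \<subset> Z \<and> Z \<subset> UU \<and> strong sc NU Z UU"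
  then obtain Z where Z: "vs.subspace Z" "WW \<subset> Z" "Z \<subset> UU" "strong sc NU Z UU" by blast
  then obtain D where D: "vs.subspace D" "D \<subseteq> CC" "Z = ssum WW (g ` D)"
    using intermediate_eq_ssum_WW_g by blast
  have "ssum B D \<noteq> A" using ssum_WW_g_D_eq_UU[OF D(1,2)] D(3) Z(3) by blast
  then have "ssum B D \<subset> A" using ssum_B_D_subset_A[OF D(1,2)] by blast
  moreover have "B \<subset> ssum B D" using B_psubset_ssum_B_D[OF D(1,2)] D(3) Z(2) by blast
  moreover have "strong sc NV (ssum B D) A" using strong_ssum_B_D[OF D(1,2)] D(3) Z(4) by blast
  ultimately show False
    using assms subspace_ssum_B_D[OF D(1,2)] unfolding minimal_strong_def by blast
qed

end

context wedge_model
begin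

lemma free_pseudosolution_bases_exist:
  assumes A: "vs.subspace A" and B: "vs.subspace B" and BA: "B \<subseteq> A" and finA: "fin_dim sc A"
    and g: "Vector_Spaces.linear sc sc g" and NV: "e.subspace NV"
    and der_N_B: "der g ` (NV \<inter> Lam2 sc B) \<subseteq> NV"
    and free: "int (vs.dim (ssum A (g ` A))) - int (vs.dim (ssum A (g ` B)))
               = int (vs.dim A) - int (vs.dim B)"
  obtains bB bC bW where "free_pseudosolution sc A B bB bC bW g NV"
proof -
  obtain S where S: "finite S" "A = vs.span S" using finA unfolding fin_dim_def by blast
  obtain bB where bB: "bB \<subseteq> B" "vs.independent bB" "B \<subseteq> vs.span bB"
    using vs.maximal_independent_subset by blast
  obtain bA where bA: "bB \<subseteq> bA" "bA \<subseteq> A" "vs.independent bA" "A \<subseteq> vs.span bA"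
    using vs.maximal_independent_subset_extend[of bB A] bB BA by blast
  have finite_bA: "finite bA" using vs.independent_span_bound[OF S(1) bA(3)] bA(2) S(2) by auto
  have span_bA: "vs.span bA = A" using vs.span_subspace[OF bA(2) bA(4) A] .
  have span_bB: "vs.span bB = B" using vs.span_subspace[OF bB(1) bB(3) B] .
  let ?W = "ssum A (g ` B)"
  have W: "vs.subspace ?W"
    using vs.subspace_ssum[OF A vv.linear_subspace_image[OF g B]] .
  obtain bW where bW: "bW \<subseteq> ?W" "vs.independent bW" "?W \<subseteq> vs.span bW"
    using vs.maximal_independent_subset by blast
  have "?W \<subseteq> vs.span (bA \<union> g ` bA)"
    using vs.span_Un_eq_ssum[of bA "g ` bA"] span_bA vv.linear_span_image[OF g] BA
    by (fastforce simp: ssum_def)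
  then have finite_bW: "finite bW"
    using vs.independent_span_bound[of "bA \<union> g ` bA" bW] finite_bA bW by auto
  have "vs.dim A = card bA" "vs.dim B = card bB"
    using vs.dim_span_eq_card_independent bA(3) bB(2) span_bA span_bB by auto
  then have "int (vs.dim A) - int (vs.dim B) = int (card (bA - bB))"
    using card_Diff_subset[OF finite_subset[OF bA(1) finite_bA] bA(1)]
      card_mono[OF finite_bA bA(1)] by simp
  then have "free_pseudosolution sc A B bB (bA - bB) bW g NV"
    using A B finite_bA bA(1,3) span_bA span_bB g NV der_N_B finite_bW bW(2) free
      vs.span_subspace[OF bW(1) bW(3) W] finite_subset[OF bA(1) finite_bA]
    by (intro free_pseudosolution.intro wedge_model_axioms free_pseudosolution_axioms.intro)
      (auto simp: Un_absorb1)
  then show ?thesis by (rule that)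
qed

theorem strong_free_pseudosolution:
  assumes A: "vs.subspace A" and B: "vs.subspace B" and BA: "B \<subseteq> A" and finA: "fin_dim sc A"
    and g: "Vector_Spaces.linear sc sc g" and NV: "e.subspace NV"
    and der_N_B: "der g ` (NV \<inter> Lam2 sc B) \<subseteq> NV"
    and free: "int (vs.dim (ssum A (g ` A))) - int (vs.dim (ssum A (g ` B)))
               = int (vs.dim A) - int (vs.dim B)"
    and strong: "strong sc NV B A"
  defines NU_eq: "NU \<equiv> ssum (NV \<inter> Lam2 sc (ssum A (g ` B))) (der g ` (NV \<inter> Lam2 sc A))"
  shows "strong sc NU (ssum A (g ` B)) (ssum A (g ` A))
       \<and> (minimal_strong sc NV B A \<longrightarrow> minimal_strong sc NU (ssum A (g ` B)) (ssum A (g ` A)))"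
proof -
  obtain bB bC bW where "free_pseudosolution sc A B bB bC bW g NV"
    using free_pseudosolution_bases_exist[OF A B BA finA g NV der_N_B free] .
  then interpret free_pseudosolution sc A B bB bC bW g NV .
  show ?thesis
    using strong_WW_UU[OF strong] minimal_strong_WW_UU
    unfolding NU_eq NU_def WW_def UU_def by blast
qed

end

theorem corollary3p5:
  fixes sc :: "'a::{field,finite} \<Rightarrow> 'v::ab_group_add \<Rightarrow> 'v"
    and V A B :: "'v set"
    and NV :: "('a, 'v) ext2 set"
    and f :: "'v \<Rightarrow> 'v"
  assumes vs: "vector_space sc"
    and V: "module.subspace sc V"
    and NV: "module.subspace esc NV" "NV \<subseteq> Lam2 sc V"
    and B: "module.subspace sc B" and A: "module.subspace sc A"
    and BA: "B \<subseteq> A" and AV: "A \<subseteq> V" and finA: "fin_dim sc A"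
    and fB: "f ` B \<subseteq> V"
    and f_lin: "linear_on sc A f"
    and f_der: "tilde sc f B ` Nof sc NV B \<subseteq> NV"
    and strongBA: "strong sc NV B A"
    and free: "int (vector_space.dim sc (ssum A (f ` A))) - int (vector_space.dim sc (ssum A (f ` B)))
               = int (vector_space.dim sc A) - int (vector_space.dim sc B)"
  defines "NU \<equiv> ssum (Nof sc NV (ssum A (f ` B))) (tilde sc f A ` Nof sc NV A)"
  shows "strong sc NU (ssum A (f ` B)) (ssum A (f ` A))
       \<and> (minimal_strong sc NV B A \<longrightarrow> minimal_strong sc NU (ssum A (f ` B)) (ssum A (f ` A)))"
proof -
  interpret wedge_model sc using vs by (simp add: wedge_model_def)
  obtain g where g: "Vector_Spaces.linear sc sc g" "\<And>x. x \<in> A \<Longrightarrow> f x = g x"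
    using linear_on_extends[OF A f_lin] by blast
  have images: "f ` A = g ` A" "f ` B = g ` B" using g(2) BA by (auto intro!: image_cong)
  have "tilde sc f X ` Nof sc NV X = der g ` (NV \<inter> Lam2 sc X)" if "X \<subseteq> A" for X
    using tilde_eq_der[OF g(1), of X f] g(2) that by (auto simp: Nof_def intro!: image_cong)
  then have "der g ` (NV \<inter> Lam2 sc B) \<subseteq> NV"
    and "NU = ssum (NV \<inter> Lam2 sc (ssum A (g ` B))) (der g ` (NV \<inter> Lam2 sc A))"
    using f_der BA by (auto simp: NU_def Nof_def images)
  then show ?thesis
    using strong_free_pseudosolution[OF A B BA finA g(1) NV(1) _ _ strongBA] free
    by (simp add: images)
qed

end
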